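(* Let $\alpha\in\{0,1\}$ and $u\geqslant1$ be integers. There exists a set $\mathfrak{A}$ of $u$ integer $3\times3$ matrices such that the multiset of absolute values of all entries of all matrices in $\mathfrak{A}$ is exactly the set $$\begin{aligned}&[4\alpha+9,2u+4\alpha+7]_2\cup[2u+4\alpha+8,3u+4\alpha+7]\cup[3u+8\alpha+16,5u+8\alpha+15]\cup[5u+12\alpha+24,6u+12\alpha+23]\\ &\cup[6u+12\alpha+25,8u+12\alpha+23]_2\cup[9u+16\alpha+32,10u+16\alpha+31]\cup[11u+20\alpha+40,12u+20\alpha+39]\\&\cup[14u+28\alpha+56,16u+28\alpha+54]_2\end{aligned}$$ (each element occurring once), and $\sigma_r(A)=\sigma_c(A)=(0,0,0)$ for every $A\in\mathfrak{A}$.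
   Context: For integers $a\equiv b\pmod d$ with $d\geqslant1$, $[a,b]_d=\{a+id: 0\leqslant i\leqslant (b-a)/d\}$ if $a\leqslant b$ and $[a,b]_d=\varnothing$ if $a>b$; $[a,b]=[a,b]_1$. For a matrix $A$, $\sigma_r(A)$ is the sequence of its row sums and $\sigma_c(A)$ the sequence of its column sums. *)

theory Defs
  imports "HOL-Analysis.Analysis" "HOL-Library.Multiset" "HOL-Library.Numeral_Type"
begin

definition iv_step :: "int \<Rightarrow> int \<Rightarrow> int \<Rightarrow> int set" where
  "iv_step d a b = (if a \<le> b then {a + i * d | i. 0 \<le> i \<and> i \<le> (b - a) div d} else {})"

definition abs_entries :: "int ^ 3 ^ 3 \<Rightarrow> int multiset" where
  "abs_entries A = image_mset (\<lambda>(i, j). \<bar>A $ i $ j\<bar>) (mset_set (UNIV :: (3 \<times> 3) set))"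

definition row_sums :: "int ^ 3 ^ 3 \<Rightarrow> int ^ 3" where
  "row_sums A = (\<chi> i. \<Sum>j\<in>UNIV. A $ i $ j)"

definition col_sums :: "int ^ 3 ^ 3 \<Rightarrow> int ^ 3" where
  "col_sums A = (\<chi> j. \<Sum>i\<in>UNIV. A $ i $ j)"

end

theory Submission
  imports Defs
begin

(* Completing a 2x2 block (a b; d e) by the negated row and column sums, with the total
   a + b + d + e in the corner, gives a 3x3 matrix with zero line sums whose absolute entries
   are a, b, d, e, a + b, d + e, a + d, b + e, a + b + d + e when a, b, d, e \<ge> 0.
   For a = c + 1 + 2k, b = 3u + c - 1 - k, d = 5u + 2c - 1 - k, e = 6u + 3c + 1 + 2k and
   k = 0, ..., u - 1, each of these nine quantities runs through an arithmetic progression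
   of length u, and for c \<ge> 0 the nine progressions lie in disjoint consecutive ranges that
   tile the required set; the theorem is the case c = 4\<alpha> + 8. *)

definition zero_sum_border :: "int \<Rightarrow> int \<Rightarrow> int \<Rightarrow> int \<Rightarrow> int ^ 3 ^ 3" where
  "zero_sum_border a b d e =
     vector [vector [a, b, -(a + b)], vector [d, e, -(d + e)],
             vector [-(a + d), -(b + e), a + b + d + e]]"

lemma row_sums_zero_sum_border: "row_sums (zero_sum_border a b d e) = 0"
  unfolding row_sums_def zero_sum_border_def by (simp add: vec_eq_iff forall_3 sum_3)

lemma col_sums_zero_sum_border: "col_sums (zero_sum_border a b d e) = 0"
  unfolding col_sums_def zero_sum_border_def by (simp add: vec_eq_iff forall_3 sum_3)

lemma abs_entries_zero_sum_border:
  assumes "0 \<le> a" "0 \<le> b" "0 \<le> d" "0 \<le> e"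
  shows "abs_entries (zero_sum_border a b d e) =
    {#a, b, a + b, d, e, d + e, a + d, b + e, a + b + d + e#}"
proof -
  have UNIV_3x3: "(UNIV :: (3 \<times> 3) set) = {1, 2, 3} \<times> {1, 2, 3}"
    by (simp add: UNIV_3 flip: UNIV_Times_UNIV)
  show ?thesis
    using assms unfolding abs_entries_def zero_sum_border_def UNIV_3x3
    by (simp add: add_mset_commute add.commute)
qed

lemma sum_singletons_inj_on:
  "inj_on f A \<Longrightarrow> (\<Sum>x\<in>A. {#f x#}) = mset_set (f ` A)"
  by (simp add: sum_unfold_sum_mset image_mset_mset_set)

lemma mset_set_Un_ordered:
  fixes A B :: "'a::linorder set"
  assumes "finite A" "finite B" "\<forall>x\<in>A. \<forall>y\<in>B. x < y"
  shows "mset_set (A \<union> B) = mset_set A + mset_set B"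
  using assms by (intro mset_set_Union) auto

lemma iv_step_1: "iv_step 1 a b = {a..b}"
proof -
  have "x \<in> {a + i * 1 |i. 0 \<le> i \<and> i \<le> (b - a) div 1}" if "x \<in> {a..b}" for x
    using that by (intro CollectI exI[of _ "x - a"]) auto
  then show ?thesis unfolding iv_step_def by auto
qed

lemma iv_step_bounds:
  assumes "x \<in> iv_step d a b" "0 < d"
  shows "a \<le> x \<and> x \<le> b"
proof -
  obtain i where x: "x = a + i * d" and i: "0 \<le> i" "i \<le> (b - a) div d"
    using assms(1) unfolding iv_step_def by (auto split: if_splits)
  have "i * d \<le> (b - a) div d * d" using i(2) assms(2) by simp
  also have "\<dots> \<le> b - a" using assms(2) by (simp add: minus_mod_eq_div_mult[symmetric])
  finally show ?thesis using x i(1) assms(2) by simp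
qed

lemma finite_iv_step [simp]: "finite (iv_step d a b)"
proof -
  have "iv_step d a b \<subseteq> (\<lambda>i. a + i * d) ` {0..(b - a) div d}"
    unfolding iv_step_def by auto
  then show ?thesis by (rule finite_subset) simp
qed

lemma image_affine_eq_iv_step:
  assumes "0 < d" "1 \<le> n" "b = a + (n - 1) * d"
  shows "(\<lambda>k. a + d * k) ` {0..n - 1} = iv_step d a b"
  using assms unfolding iv_step_def by (auto simp: mult.commute)

definition family_member :: "int \<Rightarrow> int \<Rightarrow> int \<Rightarrow> int ^ 3 ^ 3" where
  "family_member c u k =
     zero_sum_border (c + 1 + 2*k) (3*u + c - 1 - k) (5*u + 2*c - 1 - k) (6*u + 3*c + 1 + 2*k)"

definition entry_set :: "int \<Rightarrow> int \<Rightarrow> int set" where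
  "entry_set c u =
     iv_step 2 (c+1) (2*u+c-1) \<union> iv_step 1 (2*u+c) (3*u+c-1)
     \<union> iv_step 1 (3*u+2*c) (5*u+2*c-1) \<union> iv_step 1 (5*u+3*c) (6*u+3*c-1)
     \<union> iv_step 2 (6*u+3*c+1) (8*u+3*c-1) \<union> iv_step 1 (9*u+4*c) (10*u+4*c-1)
     \<union> iv_step 1 (11*u+5*c) (12*u+5*c-1) \<union> iv_step 2 (14*u+7*c) (16*u+7*c-2)"

lemma inj_family_member: "inj (family_member c u)"
proof
  fix x y assume "family_member c u x = family_member c u y"
  then have "family_member c u x $ 1 $ 1 = family_member c u y $ 1 $ 1" by simp
  then show "x = y" unfolding family_member_def zero_sum_border_def by simp
qed

lemma abs_entries_family_member:
  assumes "0 \<le> c" "k \<in> {0..u - 1}"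
  shows "abs_entries (family_member c u k) = {#c + 1 + 2*k#} + {#3*u + c - 1 - k#}
    + {#3*u + 2*c + k#} + {#5*u + 2*c - 1 - k#} + {#6*u + 3*c + 1 + 2*k#}
    + {#11*u + 5*c + k#} + {#5*u + 3*c + k#} + {#9*u + 4*c + k#} + {#14*u + 7*c + 2*k#}"
proof -
  have nonneg: "0 \<le> c + 1 + 2*k" "0 \<le> 3*u + c - 1 - k"
      "0 \<le> 5*u + 2*c - 1 - k" "0 \<le> 6*u + 3*c + 1 + 2*k"
    using assms by auto
  have sums: "(c + 1 + 2*k) + (3*u + c - 1 - k) = 3*u + 2*c + k"
      "(5*u + 2*c - 1 - k) + (6*u + 3*c + 1 + 2*k) = 11*u + 5*c + k"
      "(c + 1 + 2*k) + (5*u + 2*c - 1 - k) = 5*u + 3*c + k"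
      "(3*u + c - 1 - k) + (6*u + 3*c + 1 + 2*k) = 9*u + 4*c + k"
      "3*u + 2*c + k + (5*u + 2*c - 1 - k) + (6*u + 3*c + 1 + 2*k) = 14*u + 7*c + 2*k"
    by simp_all
  show ?thesis
    unfolding family_member_def abs_entries_zero_sum_border[OF nonneg] sums by simp
qed

lemma sum_abs_entries_family_member:
  assumes c: "0 \<le> c" and u: "1 \<le> u"
  shows "(\<Sum>k\<in>{0..u-1}. abs_entries (family_member c u k)) =
      mset_set (iv_step 2 (c+1) (2*u+c-1)) + mset_set {2*u+c..3*u+c-1}
      + mset_set {3*u+2*c..4*u+2*c-1} + mset_set {4*u+2*c..5*u+2*c-1}
      + mset_set (iv_step 2 (6*u+3*c+1) (8*u+3*c-1)) + mset_set {11*u+5*c..12*u+5*c-1}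
      + mset_set {5*u+3*c..6*u+3*c-1} + mset_set {9*u+4*c..10*u+4*c-1}
      + mset_set (iv_step 2 (14*u+7*c) (16*u+7*c-2))"
proof -
  have "(\<Sum>k\<in>{0..u-1}. abs_entries (family_member c u k)) =
      mset_set ((\<lambda>k. c + 1 + 2*k) ` {0..u-1}) + mset_set ((\<lambda>k. 3*u + c - 1 - k) ` {0..u-1})
      + mset_set ((\<lambda>k. 3*u + 2*c + k) ` {0..u-1}) + mset_set ((\<lambda>k. 5*u + 2*c - 1 - k) ` {0..u-1})
      + mset_set ((\<lambda>k. 6*u + 3*c + 1 + 2*k) ` {0..u-1}) + mset_set ((\<lambda>k. 11*u + 5*c + k) ` {0..u-1})
      + mset_set ((\<lambda>k. 5*u + 3*c + k) ` {0..u-1}) + mset_set ((\<lambda>k. 9*u + 4*c + k) ` {0..u-1})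
      + mset_set ((\<lambda>k. 14*u + 7*c + 2*k) ` {0..u-1})"
    by (simp only: sum.cong[OF refl abs_entries_family_member[OF c]] sum.distrib)
       (simp add: sum_singletons_inj_on inj_on_def)
  moreover have "(\<lambda>k. c + 1 + 2*k) ` {0..u-1} = iv_step 2 (c+1) (2*u+c-1)"
    "(\<lambda>k. 6*u + 3*c + 1 + 2*k) ` {0..u-1} = iv_step 2 (6*u+3*c+1) (8*u+3*c-1)"
    "(\<lambda>k. 14*u + 7*c + 2*k) ` {0..u-1} = iv_step 2 (14*u+7*c) (16*u+7*c-2)"
    by (rule image_affine_eq_iv_step; use u in simp)+
  moreover have "(\<lambda>k. 3*u + c - 1 - k) ` {0..u-1} = {2*u+c..3*u+c-1}"
    "(\<lambda>k. 3*u + 2*c + k) ` {0..u-1} = {3*u+2*c..4*u+2*c-1}"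
    "(\<lambda>k. 5*u + 2*c - 1 - k) ` {0..u-1} = {4*u+2*c..5*u+2*c-1}"
    "(\<lambda>k. 11*u + 5*c + k) ` {0..u-1} = {11*u+5*c..12*u+5*c-1}"
    "(\<lambda>k. 5*u + 3*c + k) ` {0..u-1} = {5*u+3*c..6*u+3*c-1}"
    "(\<lambda>k. 9*u + 4*c + k) ` {0..u-1} = {9*u+4*c..10*u+4*c-1}"
    by simp_all
  ultimately show ?thesis by (simp only:)
qed

lemma mset_set_entry_set:
  assumes c: "0 \<le> c" and u: "1 \<le> u"
  shows "mset_set (entry_set c u) =
      mset_set (iv_step 2 (c+1) (2*u+c-1)) + mset_set {2*u+c..3*u+c-1}
      + mset_set {3*u+2*c..4*u+2*c-1} + mset_set {4*u+2*c..5*u+2*c-1}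
      + mset_set (iv_step 2 (6*u+3*c+1) (8*u+3*c-1)) + mset_set {11*u+5*c..12*u+5*c-1}
      + mset_set {5*u+3*c..6*u+3*c-1} + mset_set {9*u+4*c..10*u+4*c-1}
      + mset_set (iv_step 2 (14*u+7*c) (16*u+7*c-2))"
proof -
  \<comment> \<open>each piece lies strictly below the next one; between the second and third, \<open>0 \<le> c\<close> is needed\<close>
  have "{3*u+2*c..5*u+2*c-1} = {3*u+2*c..4*u+2*c-1} \<union> {4*u+2*c..5*u+2*c-1}"
    using u by auto
  then show ?thesis
    unfolding entry_set_def iv_step_1 using u c
    by (subst mset_set_Un_ordered; auto dest!: iv_step_bounds)+
qed

lemma zero_sum_family:
  assumes "0 \<le> c" and "1 \<le> u"
  shows "\<exists>\<AA> :: (int ^ 3 ^ 3) set. finite \<AA> \<and> int (card \<AA>) = u \<and>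
    (\<Sum>A\<in>\<AA>. abs_entries A) = mset_set (entry_set c u) \<and>
    (\<forall>A\<in>\<AA>. row_sums A = 0 \<and> col_sums A = 0)"
proof (intro exI conjI)
  let ?\<AA> = "family_member c u ` {0..u-1}"
  have inj: "inj_on (family_member c u) {0..u-1}"
    using inj_family_member by (rule inj_on_subset) simp
  show "finite ?\<AA>" by simp
  show "int (card ?\<AA>) = u"
    using assms by (simp add: card_image[OF inj])
  show "(\<Sum>A\<in>?\<AA>. abs_entries A) = mset_set (entry_set c u)"
    using assms by (simp only: sum.reindex[OF inj] comp_def sum_abs_entries_family_member
        mset_set_entry_set)
  show "\<forall>A\<in>?\<AA>. row_sums A = 0 \<and> col_sums A = 0"
    by (simp add: family_member_def row_sums_zero_sum_border col_sums_zero_sum_border)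
qed

theorem lemma2p3:
  fixes \<alpha> u :: int
  assumes "\<alpha> \<in> {0, 1}" and "u \<ge> 1"
  shows "\<exists>\<AA> :: (int ^ 3 ^ 3) set. finite \<AA> \<and> int (card \<AA>) = u \<and>
    (\<Sum>A\<in>\<AA>. abs_entries A) = mset_set
      (iv_step 2 (4*\<alpha>+9) (2*u+4*\<alpha>+7) \<union> iv_step 1 (2*u+4*\<alpha>+8) (3*u+4*\<alpha>+7)
       \<union> iv_step 1 (3*u+8*\<alpha>+16) (5*u+8*\<alpha>+15) \<union> iv_step 1 (5*u+12*\<alpha>+24) (6*u+12*\<alpha>+23)
       \<union> iv_step 2 (6*u+12*\<alpha>+25) (8*u+12*\<alpha>+23) \<union> iv_step 1 (9*u+16*\<alpha>+32) (10*u+16*\<alpha>+31)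
       \<union> iv_step 1 (11*u+20*\<alpha>+40) (12*u+20*\<alpha>+39)
       \<union> iv_step 2 (14*u+28*\<alpha>+56) (16*u+28*\<alpha>+54)) \<and>
    (\<forall>A\<in>\<AA>. row_sums A = 0 \<and> col_sums A = 0)"
proof -
  have "0 \<le> 4*\<alpha> + 8" using assms(1) by auto
  from zero_sum_family[OF this assms(2)] show ?thesis
    by (simp add: entry_set_def algebra_simps)
qed

end
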